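(* (Coinduction principle.) Let $\Sigma$ be a first-order signature, $\varphi(X_1,\ldots,X_m)$ a standard formula over $\Sigma$ with free relational variables among $X_1,\ldots,X_m$ and no free individual variables, and $\mathbb{A}$ a $\Sigma$-structure. Let $R_1,\ldots,R_m$ be coinductive relations on (the carrier of) $\mathbb{A}$ with arities matching those of $X_1,\ldots,X_m$, with approximants $R_i^\alpha$. Suppose that for every ordinal $\alpha$, if $\mathbb{A}\models\varphi(R_1^\alpha,\ldots,R_m^\alpha)$ then $\mathbb{A}\models\varphi(R_1^{\alpha+1},\ldots,R_m^{\alpha+1})$. Then $\mathbb{A}\models\varphi(R_1^\alpha,\ldots,R_m^\alpha)$ for every ordinal $\alpha$; in particular $\mathbb{A}\models\varphi(R_1,\ldots,R_m)$.
   Context: Formulas are first-order formulas over $\Sigma$ additionally allowing free (never bound) relational variables; quantification is only over individuals. A formula is standard if it is equivalent to a conjunction of formulas of the form $\forall x_1\ldots\forall x_n\big(\psi(x_1,\ldots,x_n,X_1,\ldots,X_m)\to X_{i_1}(t^1_1,\ldots,t^1_{n_1})\land\cdots\land X_{i_k}(t^k_1,\ldots,t^k_{n_k})\big)$ with $\psi$ quantifier-free and $t^j_l$ terms. An $n$-ary relation $R\subseteq A^n$ is coinductive if it is the greatest fixpoint of a (specified) monotone $F:\mathcal{P}(A^n)\to\mathcal{P}(A^n)$; its approximants (the final sequence of $F$) are $R^0=A^n$, $R^{\alpha+1}=F(R^\alpha)$, and $R^\lambda=\bigcap_{\alpha<\lambda}R^\alpha$ for limit ordinals $\lambda$. $\varphi(R_1,\ldots,R_m)$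 denotes $\varphi$ with each $X_i$ interpreted as $R_i$. *)

theory Defs
  imports Main
begin

text \<open>A signature is given by the types 'f (function/constant symbols) and
 'p (relation symbols) together with arity maps fa and pa.\<close>

datatype 'f trm = Var nat | Fn 'f "'f trm list"

datatype ('f, 'p) fm =
    FF
  | TT
  | Eq "'f trm" "'f trm"
  | Rel 'p "'f trm list"
  | RVar nat "'f trm list"
  | Neg "('f, 'p) fm"
  | Conj "('f, 'p) fm" "('f, 'p) fm"
  | Disj "('f, 'p) fm" "('f, 'p) fm"
  | Impl "('f, 'p) fm" "('f, 'p) fm"
  | All nat "('f, 'p) fm"
  | Ex nat "('f, 'p) fm"

fun wf_trm :: "('f \<Rightarrow> nat) \<Rightarrow> 'f trm \<Rightarrow> bool" where
  "wf_trm fa (Var x) = True"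
| "wf_trm fa (Fn f ts) = (length ts = fa f \<and> (\<forall>t\<in>set ts. wf_trm fa t))"

fun wf_fm :: "('f \<Rightarrow> nat) \<Rightarrow> ('p \<Rightarrow> nat) \<Rightarrow> ('f, 'p) fm \<Rightarrow> bool" where
  "wf_fm fa pa FF = True"
| "wf_fm fa pa TT = True"
| "wf_fm fa pa (Eq s t) = (wf_trm fa s \<and> wf_trm fa t)"
| "wf_fm fa pa (Rel p ts) = (length ts = pa p \<and> (\<forall>t\<in>set ts. wf_trm fa t))"
| "wf_fm fa pa (RVar i ts) = (\<forall>t\<in>set ts. wf_trm fa t)"
| "wf_fm fa pa (Neg A) = wf_fm fa pa A"
| "wf_fm fa pa (Conj A B) = (wf_fm fa pa A \<and> wf_fm fa pa B)"
| "wf_fm fa pa (Disj A B) = (wf_fm fa pa A \<and> wf_fm fa pa B)"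
| "wf_fm fa pa (Impl A B) = (wf_fm fa pa A \<and> wf_fm fa pa B)"
| "wf_fm fa pa (All x A) = wf_fm fa pa A"
| "wf_fm fa pa (Ex x A) = wf_fm fa pa A"

fun rvars_ok :: "nat \<Rightarrow> (nat \<Rightarrow> nat) \<Rightarrow> ('f, 'p) fm \<Rightarrow> bool" where
  "rvars_ok m ra (RVar i ts) = (i < m \<and> length ts = ra i)"
| "rvars_ok m ra (Neg A) = rvars_ok m ra A"
| "rvars_ok m ra (Conj A B) = (rvars_ok m ra A \<and> rvars_ok m ra B)"
| "rvars_ok m ra (Disj A B) = (rvars_ok m ra A \<and> rvars_ok m ra B)"
| "rvars_ok m ra (Impl A B) = (rvars_ok m ra A \<and> rvars_ok m ra B)"
| "rvars_ok m ra (All x A) = rvars_ok m ra A"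
| "rvars_ok m ra (Ex x A) = rvars_ok m ra A"
| "rvars_ok m ra _ = True"

fun fv_trm :: "'f trm \<Rightarrow> nat set" where
  "fv_trm (Var x) = {x}"
| "fv_trm (Fn f ts) = (\<Union>t\<in>set ts. fv_trm t)"

fun fv :: "('f, 'p) fm \<Rightarrow> nat set" where
  "fv FF = {}"
| "fv TT = {}"
| "fv (Eq s t) = fv_trm s \<union> fv_trm t"
| "fv (Rel p ts) = (\<Union>t\<in>set ts. fv_trm t)"
| "fv (RVar i ts) = (\<Union>t\<in>set ts. fv_trm t)"
| "fv (Neg A) = fv A"
| "fv (Conj A B) = fv A \<union> fv B"
| "fv (Disj A B) = fv A \<union> fv B"
| "fv (Impl A B) = fv A \<union> fv B"
| "fv (All x A) = fv A - {x}"
| "fv (Ex x A) = fv A - {x}"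

fun qfree :: "('f, 'p) fm \<Rightarrow> bool" where
  "qfree (All x A) = False"
| "qfree (Ex x A) = False"
| "qfree (Neg A) = qfree A"
| "qfree (Conj A B) = (qfree A \<and> qfree B)"
| "qfree (Disj A B) = (qfree A \<and> qfree B)"
| "qfree (Impl A B) = (qfree A \<and> qfree B)"
| "qfree _ = True"

text \<open>A structure: carrier D, interpretation of function symbols FI and of
 relation symbols PI.\<close>
type_synonym ('a, 'f, 'p) struct = "'a set \<times> ('f \<Rightarrow> 'a list \<Rightarrow> 'a) \<times> ('p \<Rightarrow> 'a list \<Rightarrow> bool)"

definition is_structure :: "('f \<Rightarrow> nat) \<Rightarrow> ('a, 'f, 'p) struct \<Rightarrow> bool" where
  "is_structure fa S = (case S of (D, FI, PI) \<Rightarrow>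
     D \<noteq> {} \<and> (\<forall>f as. length as = fa f \<and> set as \<subseteq> D \<longrightarrow> FI f as \<in> D))"

fun eval :: "('f \<Rightarrow> 'a list \<Rightarrow> 'a) \<Rightarrow> (nat \<Rightarrow> 'a) \<Rightarrow> 'f trm \<Rightarrow> 'a" where
  "eval FI e (Var x) = e x"
| "eval FI e (Fn f ts) = FI f (map (eval FI e) ts)"

fun sat :: "('a, 'f, 'p) struct \<Rightarrow> (nat \<Rightarrow> 'a list set) \<Rightarrow> (nat \<Rightarrow> 'a) \<Rightarrow> ('f, 'p) fm \<Rightarrow> bool" where
  "sat S Xs e FF = False"
| "sat S Xs e TT = True"
| "sat S Xs e (Eq s t) = (eval (fst (snd S)) e s = eval (fst (snd S)) e t)"
| "sat S Xs e (Rel p ts) = snd (snd S) p (map (eval (fst (snd S)) e) ts)"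
| "sat S Xs e (RVar i ts) = (map (eval (fst (snd S)) e) ts \<in> Xs i)"
| "sat S Xs e (Neg A) = (\<not> sat S Xs e A)"
| "sat S Xs e (Conj A B) = (sat S Xs e A \<and> sat S Xs e B)"
| "sat S Xs e (Disj A B) = (sat S Xs e A \<or> sat S Xs e B)"
| "sat S Xs e (Impl A B) = (sat S Xs e A \<longrightarrow> sat S Xs e B)"
| "sat S Xs e (All x A) = (\<forall>a\<in>fst S. sat S Xs (e(x := a)) A)"
| "sat S Xs e (Ex x A) = (\<exists>a\<in>fst S. sat S Xs (e(x := a)) A)"

text \<open>S |= A(Xs): truth under all assignments into the carrier (for a
 sentence this does not depend on the assignment).\<close>
definition models :: "('a, 'f, 'p) struct \<Rightarrow> (nat \<Rightarrow> 'a list set) \<Rightarrow> ('f, 'p) fm \<Rightarrow> bool" where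
  "models S Xs A = (\<forall>e. (\<forall>x. e x \<in> fst S) \<longrightarrow> sat S Xs e A)"

text \<open>A clause (xs, psi, hs) stands for
  forall xs. (psi --> X_{i_1}(ts_1) /\ ... /\ X_{i_k}(ts_k)),  hs = [(i_1,ts_1),...].\<close>

fun foralls :: "nat list \<Rightarrow> ('f, 'p) fm \<Rightarrow> ('f, 'p) fm" where
  "foralls [] A = A"
| "foralls (x # xs) A = All x (foralls xs A)"

definition conjs :: "('f, 'p) fm list \<Rightarrow> ('f, 'p) fm" where
  "conjs As = foldr Conj As TT"

definition clause_fm :: "nat list \<times> ('f, 'p) fm \<times> (nat \<times> 'f trm list) list \<Rightarrow> ('f, 'p) fm" where
  "clause_fm c = (case c of (xs, psi, hs) \<Rightarrow>
     foralls xs (Impl psi (conjs (map (\<lambda>(i, ts). RVar i ts) hs))))"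

definition std_clause :: "('f \<Rightarrow> nat) \<Rightarrow> ('p \<Rightarrow> nat) \<Rightarrow> nat list \<times> ('f, 'p) fm \<times> (nat \<times> 'f trm list) list \<Rightarrow> bool" where
  "std_clause fa pa c = (case c of (xs, psi, hs) \<Rightarrow>
     qfree psi \<and> wf_fm fa pa psi \<and> (\<forall>(i, ts)\<in>set hs. \<forall>t\<in>set ts. wf_trm fa t))"

definition equivalent :: "('f \<Rightarrow> nat) \<Rightarrow> ('f, 'p) fm \<Rightarrow> ('f, 'p) fm \<Rightarrow> 'a itself \<Rightarrow> bool" where
  "equivalent fa A B _ = (\<forall>(S :: ('a, 'f, 'p) struct) Xs e. is_structure fa S \<longrightarrow> (\<forall>x. e x \<in> fst S) \<longrightarrow>
       (sat S Xs e A \<longleftrightarrow> sat S Xs e B))"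

definition standard :: "('f \<Rightarrow> nat) \<Rightarrow> ('p \<Rightarrow> nat) \<Rightarrow> ('f, 'p) fm \<Rightarrow> 'a itself \<Rightarrow> bool" where
  "standard fa pa A T = (\<exists>cs. (\<forall>c\<in>set cs. std_clause fa pa c) \<and>
       equivalent fa A (conjs (map clause_fm cs)) T)"

definition tuples :: "'a set \<Rightarrow> nat \<Rightarrow> 'a list set" where
  "tuples D n = {as. length as = n \<and> set as \<subseteq> D}"

definition monotone_op :: "'b set \<Rightarrow> ('b set \<Rightarrow> 'b set) \<Rightarrow> bool" where
  "monotone_op U F = ((\<forall>X. X \<subseteq> U \<longrightarrow> F X \<subseteq> U) \<and>
                      (\<forall>X Y. X \<subseteq> Y \<and> Y \<subseteq> U \<longrightarrow> F X \<subseteq> F Y))"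

definition gfp_on :: "'b set \<Rightarrow> ('b set \<Rightarrow> 'b set) \<Rightarrow> 'b set" where
  "gfp_on U F = \<Union>{X. X \<subseteq> U \<and> X \<subseteq> F X}"

text \<open>The simultaneous final sequence of the operators F_0,...,F_{m-1}
 (F_i acting on P(D^(ra i))).  approx D m ra F Y holds iff
 Y = (R_0^alpha, ..., R_{m-1}^alpha) (padded with empty sets) for some
 ordinal alpha: R^0 = D^n, R^(alpha+1) = F(R^alpha), and
 R^lambda = intersection of the earlier stages (intersection taken in P(D^n)).
 The three rules correspond exactly to the three clauses of the transfinite
 definition; since the sequence is decreasing, the intersection of any set of
 stages is again a stage.\<close>

definition approx_top :: "'a set \<Rightarrow> nat \<Rightarrow> (nat \<Rightarrow> nat) \<Rightarrow> nat \<Rightarrow> 'a list set" where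
  "approx_top D m ra = (\<lambda>i. if i < m then tuples D (ra i) else {})"

definition approx_succ :: "nat \<Rightarrow> (nat \<Rightarrow> 'a list set \<Rightarrow> 'a list set) \<Rightarrow> (nat \<Rightarrow> 'a list set) \<Rightarrow> nat \<Rightarrow> 'a list set" where
  "approx_succ m F Y = (\<lambda>i. if i < m then F i (Y i) else {})"

inductive approx :: "'a set \<Rightarrow> nat \<Rightarrow> (nat \<Rightarrow> nat) \<Rightarrow> (nat \<Rightarrow> 'a list set \<Rightarrow> 'a list set) \<Rightarrow> (nat \<Rightarrow> 'a list set) \<Rightarrow> bool"
  for D m ra F where
  approx_zero: "approx D m ra F (approx_top D m ra)"
| approx_step: "approx D m ra F Y \<Longrightarrow> approx D m ra F (approx_succ m F Y)"
| approx_limit: "(\<forall>Y\<in>S. approx D m ra F Y) \<Longrightarrow>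
    approx D m ra F (\<lambda>i. if i < m then tuples D (ra i) \<inter> (\<Inter>Y\<in>S. Y i) else {})"

definition coinductive_tuple :: "'a set \<Rightarrow> nat \<Rightarrow> (nat \<Rightarrow> nat) \<Rightarrow> (nat \<Rightarrow> 'a list set \<Rightarrow> 'a list set) \<Rightarrow> nat \<Rightarrow> 'a list set" where
  "coinductive_tuple D m ra F = (\<lambda>i. if i < m then gfp_on (tuples D (ra i)) (F i) else {})"

end

theory Submission
  imports Defs
begin

text \<open>The stages of the final sequence form a tower: the least family containing the top element
  that is closed under the step operator and under meets. By the Bourbaki-Witt double induction a
  tower is linearly ordered, so every limit stage is the top or the meet of a nonempty chain of
  earlier stages. It therefore suffices that a standard formula holds at the top, which is trivial
  because the clause heads only assert membership, and that it is preserved by meets of nonempty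
  chains. The latter holds clause by clause: along a chain the truth value of the quantifier-free
  body is eventually the one it has at the meet, and a head that holds eventually along the chain
  holds at the meet, since heads occur positively. Finally the greatest fixpoint, being the
  greatest post-fixpoint below the top, is the least stage.\<close>

section \<open>Towers in a complete lattice\<close>

inductive tower :: "'b::complete_lattice \<Rightarrow> ('b \<Rightarrow> 'b) \<Rightarrow> 'b \<Rightarrow> bool" for t f where
  tower_top: "tower t f t"
| tower_step: "tower t f x \<Longrightarrow> tower t f (f x)"
| tower_Inf: "(\<And>x. x \<in> S \<Longrightarrow> tower t f x) \<Longrightarrow> tower t f (inf t (Inf S))"

locale tower_op =
  fixes t :: "'b::complete_lattice" and f :: "'b \<Rightarrow> 'b"
  assumes step_mono: "mono_on {..t} f"
    and step_le_top: "x \<le> t \<Longrightarrow> f x \<le> t"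
begin

lemma tower_le_top: "tower t f x \<Longrightarrow> x \<le> t"
  by (induction rule: tower.induct) (auto intro: step_le_top)

text \<open>As in \<open>chain_iterates\<close>: in the successor case one inducts on \<open>y\<close>
  and compares \<open>f x\<close> with \<open>f y\<close> through the outer hypothesis at \<open>y\<close>.\<close>
lemma tower_linear:
  assumes "tower t f x" "tower t f y"
  shows "x \<le> y \<or> y \<le> x"
  using assms
proof (induction x arbitrary: y rule: tower.induct)
  case tower_top
  then show ?case by (simp add: tower_le_top)
next
  case (tower_step x)
  note x = tower_step.hyps and IH = tower_step.IH
  from \<open>tower t f y\<close> show ?case
  proof (induction y rule: tower.induct)
    case tower_top
    then show ?case by (simp add: step_le_top tower_le_top x)
  next
    case (tower_step y)
    then show ?case
      using IH[of y] tower_le_top[OF x] tower_le_top[OF \<open>tower t f y\<close>]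
      by (auto intro: mono_onD[OF step_mono])
  next
    case (tower_Inf S)
    show ?case
    proof (cases "\<exists>z\<in>S. z \<le> f x")
      case True
      then show ?thesis by (meson Inf_lower inf_le2 order_trans)
    next
      case False
      then have "f x \<le> Inf S" using tower_Inf.IH by (meson Inf_greatest)
      then show ?thesis using step_le_top tower_le_top x by simp
    qed
  qed
next
  case (tower_Inf S)
  show ?case
  proof (cases "\<exists>z\<in>S. z \<le> y")
    case True
    then show ?thesis by (meson Inf_lower inf_le2 order_trans)
  next
    case False
    then have "y \<le> Inf S" using tower_Inf.IH \<open>tower t f y\<close> by (meson Inf_greatest)
    then show ?thesis using tower_le_top \<open>tower t f y\<close> by simp
  qed
qed

lemma tower_chain_induct:
  assumes "tower t f x"
    and top: "P t"
    and step: "\<And>x. tower t f x \<Longrightarrow> P x \<Longrightarrow> P (f x)"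
    and chain: "\<And>S. S \<noteq> {} \<Longrightarrow> Complete_Partial_Order.chain (\<le>) S \<Longrightarrow>
       (\<And>x. x \<in> S \<Longrightarrow> tower t f x \<and> P x) \<Longrightarrow> P (Inf S)"
  shows "P x"
  using assms(1)
proof (induction rule: tower.induct)
  case (tower_Inf S)
  show ?case
  proof (cases "S = {}")
    case False
    have "Complete_Partial_Order.chain (\<le>) S"
      using tower_Inf.hyps tower_linear by (intro chainI) blast
    moreover have "Inf S \<le> t"
      using False tower_Inf.hyps tower_le_top by (meson Inf_lower2 ex_in_conv)
    ultimately show ?thesis
      using chain[OF False] tower_Inf by (simp add: inf_absorb2)
  qed (simp add: top)
qed (use top step in auto)

lemma postfixpoint_le_tower:
  assumes "p \<le> t" "p \<le> f p"
  shows "tower t f x \<Longrightarrow> p \<le> x"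
proof (induction rule: tower.induct)
  case (tower_step x)
  then have "f p \<le> f x" using assms tower_le_top by (auto intro: mono_onD[OF step_mono])
  then show ?case using assms(2) order_trans by blast
qed (use assms in \<open>auto intro: Inf_greatest\<close>)

lemma greatest_postfixpoint_in_tower:
  assumes "p \<le> t" "p \<le> f p" and greatest: "\<And>x. x \<le> t \<Longrightarrow> x \<le> f x \<Longrightarrow> x \<le> p"
  shows "tower t f p"
proof -
  define b where "b = inf t (Inf (Collect (tower t f)))"
  have b: "tower t f b" unfolding b_def by (rule tower_Inf) simp
  have "b \<le> Inf (Collect (tower t f))" unfolding b_def by simp
  also have "\<dots> \<le> f b" using tower_step[OF b] by (simp add: Inf_lower)
  finally have "b \<le> f b" .
  then have "b \<le> p" using greatest b tower_le_top by blast
  moreover have "p \<le> b" using postfixpoint_le_tower[OF assms(1,2)] b by blast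
  ultimately show ?thesis using b by simp
qed

end

section \<open>Standard formulas along descending chains\<close>

definition descending :: "'b::order set \<Rightarrow> 'b filter" where
  "descending S = (INF y\<in>S. principal {x\<in>S. x \<le> y})"

lemma eventually_descending_below:
  "y \<in> S \<Longrightarrow> eventually (\<lambda>x. x \<in> S \<and> x \<le> y) (descending S)"
  unfolding descending_def
  by (rule filter_leD[OF INF_lower]) (auto simp: eventually_principal)

lemma eventually_descendingD:
  assumes "S \<noteq> {}" "Complete_Partial_Order.chain (\<le>) S" "eventually P (descending S)"
  shows "\<exists>y\<in>S. \<forall>x\<in>S. x \<le> y \<longrightarrow> P x"
proof -
  have "\<exists>z\<in>S. principal {x\<in>S. x \<le> z} \<le> inf (principal {x\<in>S. x \<le> a}) (principal {x\<in>S. x \<le> b})"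
    if "a \<in> S" "b \<in> S" for a b
    using chainD[OF assms(2) that] that by (auto intro: order_trans)
  then show ?thesis
    using assms(3) unfolding descending_def
    by (simp add: eventually_INF_base[OF assms(1)] eventually_principal) blast
qed

lemma mem_Inf_apply: "a \<in> Inf S i \<longleftrightarrow> (\<forall>Y\<in>S. a \<in> Y i)"
  by (simp add: Inf_apply)

lemma mem_Inf_chain_if_eventually:
  fixes S :: "('i \<Rightarrow> 'b set) set"
  assumes "S \<noteq> {}" "Complete_Partial_Order.chain (\<le>) S"
    and "eventually (\<lambda>Y. a \<in> Y i) (descending S)"
  shows "a \<in> Inf S i"
proof -
  obtain y where "y \<in> S" and y: "\<forall>x\<in>S. x \<le> y \<longrightarrow> a \<in> x i"
    using eventually_descendingD[OF assms] by blast
  have "a \<in> Y i" if "Y \<in> S" for Y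
    using chainD[OF assms(2) that \<open>y \<in> S\<close>] y that \<open>y \<in> S\<close> by (auto simp: le_fun_def)
  then show ?thesis by (simp add: mem_Inf_apply)
qed

lemma eventually_sat_qfree_Inf:
  assumes "S \<noteq> {}" "qfree \<psi>"
  shows "eventually (\<lambda>Y. sat M Y e \<psi> \<longleftrightarrow> sat M (Inf S) e \<psi>) (descending S)"
  using assms(2)
proof (induction \<psi>)
  case (RVar i ts)
  let ?a = "map (eval (fst (snd M)) e) ts"
  show ?case
  proof (cases "\<forall>Y\<in>S. ?a \<in> Y i")
    case True
    obtain y where "y \<in> S" using assms(1) by blast
    from eventually_descending_below[OF this] have "eventually (\<lambda>Y. ?a \<in> Y i) (descending S)"
      by (rule eventually_mono) (use True in blast)
    with True show ?thesis by (simp add: mem_Inf_apply)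
  next
    case False
    then obtain y where "y \<in> S" "?a \<notin> y i" by blast
    from eventually_descending_below[OF this(1)] have "eventually (\<lambda>Y. ?a \<notin> Y i) (descending S)"
      by (rule eventually_mono) (use \<open>?a \<notin> y i\<close> in \<open>auto simp: le_fun_def\<close>)
    with False show ?thesis by (auto simp: mem_Inf_apply elim!: eventually_mono)
  qed
qed (auto elim: eventually_elim2)

lemma sat_conjs: "sat M X e (conjs As) \<longleftrightarrow> (\<forall>A\<in>set As. sat M X e A)"
  by (induction As) (auto simp: conjs_def)

lemma sat_conjs_RVar:
  "sat M X e (conjs (map (\<lambda>(i, ts). RVar i ts) hs)) \<longleftrightarrow>
     (\<forall>(i, ts)\<in>set hs. map (eval (fst (snd M)) e) ts \<in> X i)"
  by (auto simp: sat_conjs)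

lemma sat_clause_Inf_chain:
  assumes "S \<noteq> {}" "Complete_Partial_Order.chain (\<le>) S" "qfree \<psi>"
  shows "\<forall>Y\<in>S. sat M Y e (clause_fm (xs, \<psi>, hs)) \<Longrightarrow> sat M (Inf S) e (clause_fm (xs, \<psi>, hs))"
  unfolding clause_fm_def prod.case
proof (induction xs arbitrary: e)
  case Nil
  show ?case
  proof (simp only: foralls.simps sat.simps sat_conjs_RVar, intro impI ballI)
    fix p assume "sat M (Inf S) e \<psi>" and p: "p \<in> set hs"
    obtain i ts where [simp]: "p = (i, ts)" by fastforce
    obtain y where "y \<in> S" using assms(1) by blast
    have "eventually (\<lambda>Y. sat M Y e \<psi>) (descending S)"
      using eventually_sat_qfree_Inf[OF assms(1,3), of M e]
      by (rule eventually_mono) (use \<open>sat M (Inf S) e \<psi>\<close> in simp)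
    moreover have "eventually (\<lambda>Y. Y \<in> S) (descending S)"
      using eventually_descending_below[OF \<open>y \<in> S\<close>] by (rule eventually_mono) simp
    ultimately have "eventually (\<lambda>Y. map (eval (fst (snd M)) e) ts \<in> Y i) (descending S)"
      by (rule eventually_elim2) (use Nil p in \<open>auto simp: sat_conjs_RVar\<close>)
    then show "case p of (i, ts) \<Rightarrow> map (eval (fst (snd M)) e) ts \<in> Inf S i"
      using mem_Inf_chain_if_eventually[OF assms(1,2)] by simp
  qed
next
  case (Cons x xs)
  then show ?case by (simp only: foralls.simps sat.simps) blast
qed

lemma standard_clauses:
  assumes "standard fa pa \<phi> TYPE('a)" "is_structure fa (M :: ('a, 'f, 'p) struct)" "\<forall>x. e x \<in> fst M"
  obtains cs where "\<forall>(xs, \<psi>, hs)\<in>set cs. qfree \<psi>"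
    and "\<And>X. sat M X e \<phi> \<longleftrightarrow> (\<forall>c\<in>set cs. sat M X e (clause_fm c))"
proof -
  obtain cs where cs: "\<forall>c\<in>set cs. std_clause fa pa c"
    and eq: "equivalent fa \<phi> (conjs (map clause_fm cs)) TYPE('a)"
    using assms(1) unfolding standard_def by blast
  show thesis
  proof (rule that)
    show "\<forall>(xs, \<psi>, hs)\<in>set cs. qfree \<psi>" using cs by (auto simp: std_clause_def)
    have "sat M X e \<phi> \<longleftrightarrow> sat M X e (conjs (map clause_fm cs))" for X
      using eq assms(2,3) unfolding equivalent_def by blast
    then show "sat M X e \<phi> \<longleftrightarrow> (\<forall>c\<in>set cs. sat M X e (clause_fm c))" for X
      by (simp add: sat_conjs)
  qed
qed

lemma models_Inf_chain:
  assumes "is_structure fa M" "standard fa pa \<phi> TYPE('a)"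
    and "S \<noteq> {}" "Complete_Partial_Order.chain (\<le>) S"
    and "\<forall>Y\<in>S. models (M :: ('a, 'f, 'p) struct) Y \<phi>"
  shows "models M (Inf S) \<phi>"
  unfolding models_def
proof (intro allI impI)
  fix e :: "nat \<Rightarrow> 'a" assume e: "\<forall>x. e x \<in> fst M"
  obtain cs where qf: "\<forall>(xs, \<psi>, hs)\<in>set cs. qfree \<psi>"
    and eq: "\<And>X. sat M X e \<phi> \<longleftrightarrow> (\<forall>c\<in>set cs. sat M X e (clause_fm c))"
    by (rule standard_clauses[OF assms(2,1) e]) blast
  have "sat M (Inf S) e (clause_fm (xs, \<psi>, hs))" if c: "(xs, \<psi>, hs) \<in> set cs" for xs \<psi> hs
  proof -
    have "qfree \<psi>" using qf c by auto
    moreover have "sat M Y e (clause_fm (xs, \<psi>, hs))" if "Y \<in> S" for Y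
      using assms(5) that e eq[of Y] c unfolding models_def by blast
    ultimately show ?thesis using sat_clause_Inf_chain[OF assms(3,4)] by blast
  qed
  then show "sat M (Inf S) e \<phi>" using eq by auto
qed

lemma eval_in_carrier:
  assumes "is_structure fa (D, FI, PI)" "\<forall>x. e x \<in> D"
  shows "wf_trm fa t \<Longrightarrow> eval FI e t \<in> D"
proof (induction t)
  case (Fn f ts)
  then have "set (map (eval FI e) ts) \<subseteq> D" by auto
  then show ?case using assms(1) Fn unfolding is_structure_def by simp
qed (use assms in simp)

lemma sat_cong_rvars:
  assumes "is_structure fa (D, FI, PI)"
    and "\<forall>i<m. X i \<inter> tuples D (ra i) = X' i \<inter> tuples D (ra i)"
  shows "rvars_ok m ra A \<Longrightarrow> wf_fm fa pa A \<Longrightarrow> \<forall>x. e x \<in> D \<Longrightarrow>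
     sat (D, FI, PI) X e A \<longleftrightarrow> sat (D, FI, PI) X' e A"
proof (induction A arbitrary: e)
  case (RVar i ts)
  then have "map (eval FI e) ts \<in> tuples D (ra i)"
    using eval_in_carrier[OF assms(1)] by (auto simp: tuples_def)
  then show ?case using RVar assms(2) by auto
qed auto

lemma sat_clause_UNIV: "sat M (\<lambda>_. UNIV) e (clause_fm c)"
proof -
  have "sat M (\<lambda>_. UNIV) e (foralls xs (Impl \<psi> (conjs (map (\<lambda>(i, ts). RVar i ts) hs))))"
    for xs \<psi> hs
    by (induction xs arbitrary: e) (auto simp: sat_conjs_RVar)
  then show ?thesis by (simp add: clause_fm_def split: prod.splits)
qed

lemma models_approx_top:
  assumes "is_structure fa (D, FI, PI)" "wf_fm fa pa \<phi>" "standard fa pa \<phi> TYPE('a)"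
    and "rvars_ok m ra \<phi>"
  shows "models (D, FI, PI) (approx_top (D :: 'a set) m ra) \<phi>"
  unfolding models_def
proof (intro allI impI)
  fix e :: "nat \<Rightarrow> 'a" assume e: "\<forall>x. e x \<in> fst (D, FI, PI)"
  obtain cs where "\<forall>(xs, \<psi>, hs)\<in>set cs. qfree \<psi>"
    and "\<And>X. sat (D, FI, PI) X e \<phi> \<longleftrightarrow> (\<forall>c\<in>set cs. sat (D, FI, PI) X e (clause_fm c))"
    by (rule standard_clauses[OF assms(3,1) e]) blast
  then have "sat (D, FI, PI) (\<lambda>_. UNIV) e \<phi>" by (simp add: sat_clause_UNIV)
  moreover have "\<forall>i<m. approx_top D m ra i \<inter> tuples D (ra i) = UNIV \<inter> tuples D (ra i)"
    by (simp add: approx_top_def)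
  ultimately show "sat (D, FI, PI) (approx_top D m ra) e \<phi>"
    using sat_cong_rvars[OF assms(1) _ assms(4,2)] e by (metis fst_conv)
qed

section \<open>The final sequence of the operators\<close>

lemma approx_eq_tower: "approx D m ra F = tower (approx_top D m ra) (approx_succ m F)"
proof -
  have limit: "(\<lambda>i. if i < m then tuples D (ra i) \<inter> (\<Inter>Y\<in>S. Y i) else {}) =
      inf (approx_top D m ra) (Inf S)" for S :: "(nat \<Rightarrow> 'a list set) set"
    by (rule ext) (auto simp: approx_top_def Inf_apply)
  have "approx D m ra F Y \<Longrightarrow> tower (approx_top D m ra) (approx_succ m F) Y" for Y
    by (induction rule: approx.induct) (auto simp: limit intro: tower.intros)
  moreover have "tower (approx_top D m ra) (approx_succ m F) Y \<Longrightarrow> approx D m ra F Y" for Y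
    by (induction rule: tower.induct) (auto simp flip: limit intro: approx.intros)
  ultimately show ?thesis by blast
qed

lemma tower_op_approx_succ:
  assumes "\<forall>i<m. monotone_op (tuples D (ra i)) (F i)"
  shows "tower_op (approx_top D m ra) (approx_succ m F)"
proof
  show "mono_on {..approx_top D m ra} (approx_succ m F)"
  proof (intro mono_onI le_funI)
    fix X Y i assume "X \<le> Y" "Y \<in> {..approx_top D m ra}"
    then have XY: "X i \<subseteq> Y i" "Y i \<subseteq> approx_top D m ra i" by (auto dest: le_funD)
    show "approx_succ m F X i \<le> approx_succ m F Y i"
    proof (cases "i < m")
      case True
      with XY assms have "F i (X i) \<subseteq> F i (Y i)"
        unfolding monotone_op_def approx_top_def by simp
      with True show ?thesis by (simp add: approx_succ_def)
    qed (simp add: approx_succ_def)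
  qed
  show "approx_succ m F Y \<le> approx_top D m ra" if "Y \<le> approx_top D m ra" for Y
  proof (rule le_funI)
    fix i
    have "Y i \<subseteq> approx_top D m ra i" using that by (rule le_funD)
    with assms have "i < m \<Longrightarrow> F i (Y i) \<subseteq> tuples D (ra i)"
      unfolding monotone_op_def approx_top_def by simp
    then show "approx_succ m F Y i \<le> approx_top D m ra i"
      by (simp add: approx_succ_def approx_top_def)
  qed
qed

lemma gfp_on_subset: "gfp_on U F \<subseteq> U"
  unfolding gfp_on_def by auto

lemma gfp_on_greatest: "X \<subseteq> U \<Longrightarrow> X \<subseteq> F X \<Longrightarrow> X \<subseteq> gfp_on U F"
  unfolding gfp_on_def by auto

lemma gfp_on_postfixpoint:
  assumes "monotone_op U F"
  shows "gfp_on U F \<subseteq> F (gfp_on U F)"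
proof
  fix a assume "a \<in> gfp_on U F"
  then obtain X where X: "X \<subseteq> U" "X \<subseteq> F X" "a \<in> X" unfolding gfp_on_def by auto
  have "X \<subseteq> gfp_on U F" using X(1,2) by (rule gfp_on_greatest)
  then have "F X \<subseteq> F (gfp_on U F)"
    using assms gfp_on_subset[of U F] unfolding monotone_op_def by blast
  then show "a \<in> F (gfp_on U F)" using X by blast
qed

lemma coinductive_tuple_greatest_postfixpoint:
  assumes "\<forall>i<m. monotone_op (tuples D (ra i)) (F i)"
  shows "coinductive_tuple D m ra F \<le> approx_top D m ra"
    and "coinductive_tuple D m ra F \<le> approx_succ m F (coinductive_tuple D m ra F)"
    and "Y \<le> approx_top D m ra \<Longrightarrow> Y \<le> approx_succ m F Y \<Longrightarrow> Y \<le> coinductive_tuple D m ra F"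
proof -
  show "coinductive_tuple D m ra F \<le> approx_top D m ra"
    by (simp add: le_fun_def coinductive_tuple_def approx_top_def gfp_on_subset)
  show "coinductive_tuple D m ra F \<le> approx_succ m F (coinductive_tuple D m ra F)"
    using assms by (simp add: le_fun_def coinductive_tuple_def approx_succ_def gfp_on_postfixpoint)
  assume "Y \<le> approx_top D m ra" "Y \<le> approx_succ m F Y"
  then have Y: "Y i \<subseteq> approx_top D m ra i" "Y i \<subseteq> approx_succ m F Y i" for i
    by (auto dest: le_funD)
  show "Y \<le> coinductive_tuple D m ra F"
  proof (rule le_funI)
    fix i
    show "Y i \<le> coinductive_tuple D m ra F i"
    proof (cases "i < m")
      case True
      with Y[of i] have "Y i \<subseteq> tuples D (ra i)" "Y i \<subseteq> F i (Y i)"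
        by (simp_all add: approx_top_def approx_succ_def)
      with True show ?thesis by (simp add: coinductive_tuple_def gfp_on_greatest)
    qed (use Y[of i] in \<open>simp add: approx_top_def\<close>)
  qed
qed

theorem theorem4p29:
  fixes fa :: "'f \<Rightarrow> nat" and pa :: "'p \<Rightarrow> nat"
    and D :: "'a set" and FI :: "'f \<Rightarrow> 'a list \<Rightarrow> 'a" and PI :: "'p \<Rightarrow> 'a list \<Rightarrow> bool"
    and \<phi> :: "('f, 'p) fm" and m :: nat and ra :: "nat \<Rightarrow> nat"
    and F :: "nat \<Rightarrow> 'a list set \<Rightarrow> 'a list set"
  assumes struct: "is_structure fa (D, FI, PI)"
    and wf: "wf_fm fa pa \<phi>"
    and std: "standard fa pa \<phi> TYPE('a)"
    and sentence: "fv \<phi> = {}"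
    and rvars: "rvars_ok m ra \<phi>"
    and mono: "\<forall>i<m. monotone_op (tuples D (ra i)) (F i)"
    and step: "\<forall>Y. approx D m ra F Y \<longrightarrow> models (D, FI, PI) Y \<phi> \<longrightarrow>
                   models (D, FI, PI) (approx_succ m F Y) \<phi>"
  shows "(\<forall>Y. approx D m ra F Y \<longrightarrow> models (D, FI, PI) Y \<phi>) \<and>
         models (D, FI, PI) (coinductive_tuple D m ra F) \<phi>"
proof -
  interpret tower_op "approx_top D m ra" "approx_succ m F"
    using tower_op_approx_succ[OF mono] .
  have stages: "models (D, FI, PI) Y \<phi>" if "approx D m ra F Y" for Y
    using that[unfolded approx_eq_tower]
  proof (rule tower_chain_induct)
    show "models (D, FI, PI) (approx_top D m ra) \<phi>"
      using models_approx_top[OF struct wf std rvars] .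
  next
    show "models (D, FI, PI) (approx_succ m F Y) \<phi>"
      if "tower (approx_top D m ra) (approx_succ m F) Y" "models (D, FI, PI) Y \<phi>" for Y
      using step that by (simp add: approx_eq_tower)
  next
    show "models (D, FI, PI) (Inf S) \<phi>"
      if "S \<noteq> {}" "Complete_Partial_Order.chain (\<le>) S"
        "\<And>Y. Y \<in> S \<Longrightarrow> tower (approx_top D m ra) (approx_succ m F) Y \<and> models (D, FI, PI) Y \<phi>"
      for S
      using models_Inf_chain[OF struct std that(1,2)] that(3) by blast
  qed
  have "approx D m ra F (coinductive_tuple D m ra F)"
    unfolding approx_eq_tower
    by (rule greatest_postfixpoint_in_tower) (use coinductive_tuple_greatest_postfixpoint[OF mono] in auto)
  with stages show ?thesis by blast
qed

end
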